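(* Let $\mathcal{L}\subset\mathcal{L}_*$ be lineages with hierarchical generators $\mathcal{H},\mathcal{H}_*$, and assume $\mathcal{H}$ is linearly independent (as a set of functions on $\mathbb{R}^d$). Let $\mathcal{R}=\mathcal{L}_*\setminus\mathcal{L}$. Then for every $\varphi\in\mathcal{R}\cap\mathcal{H}$ there exist $k\ge1$ and $\varphi_*\in(\mathcal{H}_*\setminus\mathcal{H})\cap\mathrm{ch}^k(\varphi)$.
   Context: Fix integers $d\ge1$, $n\ge2$, $m\ge2$; $s=n-1$, $p=m-1$. B-splines $\varphi^\ell_{\vec i}(\vec x)=\prod_kQ(n^\ell x_k-i_k)$ on $\mathbb{R}^d$ for $\ell\ge0$, $\vec i\in\mathbb{Z}^d$, $Q$ the uniform B-spline of order $m$ with knots $0,\dots,m$; $\mathfrak{B}$ the set of all of them; $\mathcal{B}^0=\{\varphi^0_{\vec i}:\vec i\in[-p:0]^d\}$. Children $\mathrm{ch}(\varphi^\ell_{\vec i})=\{\varphi^{\ell+1}_{\vec k}:n\vec i\le\vec k\le n\vec i+sm\}$, extended to sets by union, $\mathrm{ch}^k$ the $k$-fold application. A lineage is a finite $\mathcal{L}\subset\mathfrak{B}$ with $\mathcal{L}\subset\mathcal{B}^0\cup\mathrm{ch}(\mathcal{L})$; its hierarchical generator is $(\mathcal{B}^0\cup\mathrm{ch}(\mathcal{L}))\setminus\mathcal{L}$. *)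

theory Defs
  imports "HOL-Analysis.Analysis"
begin

text \<open>Uniform (cardinal) B-spline of order m with knots 0,1,...,m, via the
Cox--de Boor recursion. Order 1 is the indicator of [0,1).\<close>
fun Qspl :: "nat \<Rightarrow> real \<Rightarrow> real" where
  "Qspl 0 x = 0"
| "Qspl (Suc 0) x = (if 0 \<le> x \<and> x < 1 then 1 else 0)"
| "Qspl (Suc (Suc k)) x =
     (x * Qspl (Suc k) x + (real k + 2 - x) * Qspl (Suc k) (x - 1)) / (real k + 1)"

definition bspl :: "nat \<Rightarrow> nat \<Rightarrow> nat \<Rightarrow> int ^ 'd \<Rightarrow> (real ^ 'd::finite \<Rightarrow> real)" where
  "bspl n m l i = (\<lambda>x. \<Prod>j\<in>UNIV. Qspl m (real n ^ l * x $ j - real_of_int (i $ j)))"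

definition Bsplines :: "nat \<Rightarrow> nat \<Rightarrow> (real ^ 'd::finite \<Rightarrow> real) set" where
  "Bsplines n m = {bspl n m l i | l i. True}"

definition B0 :: "nat \<Rightarrow> nat \<Rightarrow> (real ^ 'd::finite \<Rightarrow> real) set" where
  "B0 n m = {bspl n m 0 i | i. \<forall>j. - (int m - 1) \<le> i $ j \<and> i $ j \<le> 0}"

definition ch :: "nat \<Rightarrow> nat \<Rightarrow> (real ^ 'd::finite \<Rightarrow> real) \<Rightarrow> (real ^ 'd \<Rightarrow> real) set" where
  "ch n m \<phi> = {bspl n m (Suc l) k | l i k. \<phi> = bspl n m l i \<and>
      (\<forall>j. int n * i $ j \<le> k $ j \<and> k $ j \<le> int n * i $ j + (int n - 1) * int m)}"

definition chS :: "nat \<Rightarrow> nat \<Rightarrow> (real ^ 'd::finite \<Rightarrow> real) set \<Rightarrow> (real ^ 'd \<Rightarrow> real) set" where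
  "chS n m S = (\<Union>\<phi>\<in>S. ch n m \<phi>)"

definition lineage :: "nat \<Rightarrow> nat \<Rightarrow> (real ^ 'd::finite \<Rightarrow> real) set \<Rightarrow> bool" where
  "lineage n m L \<longleftrightarrow> finite L \<and> L \<subseteq> Bsplines n m \<and> L \<subseteq> B0 n m \<union> chS n m L"

definition hgen :: "nat \<Rightarrow> nat \<Rightarrow> (real ^ 'd::finite \<Rightarrow> real) set \<Rightarrow> (real ^ 'd \<Rightarrow> real) set" where
  "hgen n m L = (B0 n m \<union> chS n m L) - L"

definition lin_indep_fun :: "('a \<Rightarrow> real) set \<Rightarrow> bool" where
  "lin_indep_fun S \<longleftrightarrow> (\<forall>T c. finite T \<and> T \<subseteq> S \<and> (\<forall>x. (\<Sum>f\<in>T. c f * f x) = 0)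
      \<longrightarrow> (\<forall>f\<in>T. c f = 0))"

end

theory Submission
  imports Defs "HOL-Computational_Algebra.Polynomial" "HOL-Library.Function_Algebras"
begin

text \<open>Every B-spline is a linear combination of its own children. This two-scale relation comes
from writing the cardinal B-spline as \<open>(1 - S)\<^sup>m\<close> applied to a truncated power, \<open>S\<close> the unit
shift, and factoring \<open>1 - S\<^sup>n = (1 - S)(1 + S + \<dots> + S\<^sup>n\<^sup>-\<^sup>1)\<close>. Iterating it inside the finite
lineage \<open>\<L>\<^sub>*\<close>, every \<open>\<phi> \<in> \<R>\<close> lies in the span of those of its descendants that are children
of \<open>\<L>\<^sub>*\<close> but not members of it; all of these belong to \<open>\<H>\<^sub>*\<close>. If none of them were outside
\<open>\<H>\<close>, then \<open>\<phi> \<in> \<H>\<close> would be a combination of other elements of \<open>\<H>\<close> (descendants live on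
strictly finer levels), contradicting independence.\<close>

subsection \<open>Polynomials in the shift operator\<close>

text \<open>\<open>poly_shift f p\<close> is \<open>p(S) f\<close>, where \<open>S\<close> is the unit shift \<open>(S f) y = f (y - 1)\<close>.\<close>
definition poly_shift :: "(real \<Rightarrow> real) \<Rightarrow> real poly \<Rightarrow> real \<Rightarrow> real" where
  "poly_shift f p y = (\<Sum>i\<le>degree p. coeff p i * f (y - real i))"

lemma poly_shift_eq_sum_atMost:
  "degree p \<le> N \<Longrightarrow> poly_shift f p y = (\<Sum>i\<le>N. coeff p i * f (y - real i))"
  unfolding poly_shift_def by (rule sum.mono_neutral_left) (auto simp: coeff_eq_0)

lemma poly_shift_0 [simp]: "poly_shift f 0 y = 0"
  by (simp add: poly_shift_def)

lemma poly_shift_const [simp]: "poly_shift f [:a:] y = a * f y"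
  by (simp add: poly_shift_def)

lemma poly_shift_add: "poly_shift f (p + q) y = poly_shift f p y + poly_shift f q y"
proof -
  let ?N = "degree p + degree q"
  have "poly_shift f (p + q) y = (\<Sum>i\<le>?N. coeff (p + q) i * f (y - real i))"
    by (rule poly_shift_eq_sum_atMost) (meson degree_add_le le_add1 le_add2)
  then show ?thesis
    by (simp add: poly_shift_eq_sum_atMost[of p ?N] poly_shift_eq_sum_atMost[of q ?N]
        sum.distrib algebra_simps)
qed

lemma poly_shift_smult: "poly_shift f (smult a p) y = a * poly_shift f p y"
  by (simp add: poly_shift_eq_sum_atMost[of "smult a p" "degree p"] poly_shift_def
      sum_distrib_left mult.assoc)

lemma poly_shift_diff: "poly_shift f (p - q) y = poly_shift f p y - poly_shift f q y"
proof -
  have "p - q = p + smult (-1) q" by simp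
  then show ?thesis by (simp only: poly_shift_add poly_shift_smult)
qed

lemma poly_shift_pCons_0: "poly_shift f (pCons 0 p) y = poly_shift f p (y - 1)"
proof -
  have "poly_shift f (pCons 0 p) y
      = (\<Sum>i\<le>Suc (degree p). coeff (pCons 0 p) i * f (y - real i))"
    by (rule poly_shift_eq_sum_atMost) (simp add: degree_pCons_le)
  also have "\<dots> = (\<Sum>i\<le>degree p. coeff p i * f (y - 1 - real i))"
    by (subst sum.atMost_Suc_shift) (simp add: algebra_simps)
  finally show ?thesis by (simp add: poly_shift_def)
qed

lemma poly_shift_pCons: "poly_shift f (pCons a p) y = a * f y + poly_shift f p (y - 1)"
  using poly_shift_add[of f "[:a:]" "pCons 0 p" y] by (simp add: poly_shift_pCons_0)

lemma poly_shift_monom: "poly_shift f (monom 1 k) y = f (y - real k)"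
  by (induction k arbitrary: y) (simp_all add: monom_Suc monom_0 poly_shift_pCons_0 algebra_simps)

lemma poly_shift_mult: "poly_shift f (p * q) y = poly_shift (poly_shift f p) q y"
proof (induction q arbitrary: y)
  case (pCons a q)
  have "p * pCons a q = smult a p + pCons 0 (p * q)" by simp
  then show ?case
    using pCons.IH by (simp only: poly_shift_add poly_shift_smult poly_shift_pCons_0 poly_shift_pCons)
qed simp

lemma poly_shift_cong: "(\<And>u. f u = g u) \<Longrightarrow> poly_shift f p y = poly_shift g p y"
  by (simp add: poly_shift_def)

lemma poly_shift_scale_fun: "poly_shift (\<lambda>u. c * f u) p y = c * poly_shift f p y"
  by (simp add: poly_shift_def sum_distrib_left algebra_simps)

text \<open>Substituting \<open>X\<^sup>n\<close> turns the unit shift into a shift by \<open>n\<close>, i.e. a unit shift after dilation.\<close>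
lemma poly_shift_pcompose_monom:
  assumes "n > 0"
  shows "poly_shift f (pcompose p (monom 1 n)) (real n * x) = poly_shift (\<lambda>u. f (real n * u)) p x"
proof (induction p arbitrary: x)
  case (pCons a p)
  have "poly_shift f (pcompose p (monom 1 n) * monom 1 n) (real n * x)
      = poly_shift f (pcompose p (monom 1 n)) (real n * (x - 1))"
    by (simp only: poly_shift_mult poly_shift_monom) (simp add: algebra_simps)
  then show ?case
    using pCons.IH by (simp add: pcompose_pCons poly_shift_add poly_shift_pCons mult.commute)
qed simp

subsection \<open>Truncated powers and the two-scale relation\<close>

definition trunc_pow :: "nat \<Rightarrow> real \<Rightarrow> real" where
  "trunc_pow k y = (if 0 \<le> y then y ^ k else 0)"

lemma trunc_pow_dilate: "n > 0 \<Longrightarrow> trunc_pow k (real n * u) = real n ^ k * trunc_pow k u"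
  by (simp add: trunc_pow_def zero_le_mult_iff power_mult_distrib)

lemma poly_shift_trunc_pow_mult_var:
  "y * poly_shift (trunc_pow k) p y
     = poly_shift (trunc_pow (Suc k)) p y + poly_shift (trunc_pow k) (pCons 0 (pderiv p)) y"
proof -
  let ?N = "Suc (degree p)"
  have deg: "degree (pCons 0 (pderiv p)) \<le> ?N"
    using degree_pCons_le[of 0 "pderiv p"] degree_pderiv[of p] by simp
  have coeff: "coeff (pCons 0 (pderiv p)) i = real i * coeff p i" for i
    by (cases i) (simp_all add: coeff_pderiv)
  have times_var: "y * trunc_pow k (y - real i)
      = trunc_pow (Suc k) (y - real i) + real i * trunc_pow k (y - real i)" for i
    by (simp add: trunc_pow_def algebra_simps)
  have "y * poly_shift (trunc_pow k) p y = (\<Sum>i\<le>?N. coeff p i * (y * trunc_pow k (y - real i)))"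
    by (simp add: poly_shift_eq_sum_atMost[of p ?N] sum_distrib_left algebra_simps)
  also have "\<dots> = (\<Sum>i\<le>?N. coeff p i * trunc_pow (Suc k) (y - real i))
       + (\<Sum>i\<le>?N. coeff (pCons 0 (pderiv p)) i * trunc_pow k (y - real i))"
    by (simp add: times_var coeff sum.distrib algebra_simps)
  also have "\<dots> = poly_shift (trunc_pow (Suc k)) p y + poly_shift (trunc_pow k) (pCons 0 (pderiv p)) y"
    using deg by (simp add: poly_shift_eq_sum_atMost[of p ?N] poly_shift_eq_sum_atMost[of _ ?N])
  finally show ?thesis .
qed

lemma one_minus_X_power_ode:
  fixes k :: nat
  defines "p \<equiv> [:1, -1:] ^ Suc k :: real poly"
  shows "[:1, -1:] * pderiv p + smult (real k + 1) p = 0"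
proof -
  have "pderiv p = smult (real (Suc k)) ([:1, -1:] ^ k) * [:-1:]"
    unfolding p_def pderiv_power_Suc by (simp add: pderiv_pCons)
  moreover have "p = [:1, -1:] * [:1, -1:] ^ k"
    unfolding p_def by (simp only: power_Suc)
  moreover have "x * [:-1:] = - x" for x :: "real poly"
    by (simp add: mult_poly_0_left)
  ultimately show ?thesis
    by (simp add: algebra_simps)
qed

text \<open>One Cox--de Boor step, carried out on the truncated-power representation.\<close>
lemma poly_shift_trunc_pow_recurrence:
  fixes k :: nat
  defines "p \<equiv> [:1, -1:] ^ Suc k :: real poly"
  shows "y * poly_shift (trunc_pow k) p y + (real k + 2 - y) * poly_shift (trunc_pow k) p (y - 1)
       = poly_shift (trunc_pow (Suc k)) ([:1, -1:] ^ Suc (Suc k)) y"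
proof -
  define r where "r = pCons 0 (pderiv p)"
  have shift_y: "y * poly_shift (trunc_pow k) p y = poly_shift (trunc_pow (Suc k)) p y + poly_shift (trunc_pow k) r y"
    and shift_y1: "(y - 1) * poly_shift (trunc_pow k) p (y - 1)
        = poly_shift (trunc_pow (Suc k)) p (y - 1) + poly_shift (trunc_pow k) r (y - 1)"
    unfolding r_def by (rule poly_shift_trunc_pow_mult_var)+
  have "r - pCons 0 r + smult (real k + 1) (pCons 0 p) = pCons 0 ([:1, -1:] * pderiv p + smult (real k + 1) p)"
    unfolding r_def by (simp add: algebra_simps)
  then have "r - pCons 0 r + smult (real k + 1) (pCons 0 p) = 0"
    unfolding p_def by (simp only: one_minus_X_power_ode pCons_0_0)
  then have ode: "poly_shift (trunc_pow k) r y - poly_shift (trunc_pow k) r (y - 1)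
      + (real k + 1) * poly_shift (trunc_pow k) p (y - 1) = 0"
    by (metis poly_shift_0 poly_shift_add poly_shift_diff poly_shift_pCons_0 poly_shift_smult)
  have "[:1, -1:] ^ Suc (Suc k) = p - pCons 0 p"
    unfolding p_def by simp
  then have "poly_shift (trunc_pow (Suc k)) ([:1, -1:] ^ Suc (Suc k)) y
      = poly_shift (trunc_pow (Suc k)) p y - poly_shift (trunc_pow (Suc k)) p (y - 1)"
    by (simp only: poly_shift_diff poly_shift_pCons_0)
  with shift_y shift_y1 ode show ?thesis
    by (simp add: algebra_simps)
qed

lemma Qspl_eq_poly_shift_trunc_pow:
  "Qspl (Suc k) y = poly_shift (trunc_pow k) ([:1, -1:] ^ Suc k) y / fact k"
proof (induction k arbitrary: y)
  case 0
  show ?case by (simp add: poly_shift_pCons trunc_pow_def)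
next
  case (Suc k)
  have "Qspl (Suc (Suc k)) y
      = (y * Qspl (Suc k) y + (real k + 2 - y) * Qspl (Suc k) (y - 1)) / (real k + 1)"
    by simp
  also have "\<dots> = poly_shift (trunc_pow (Suc k)) ([:1, -1:] ^ Suc (Suc k)) y / (fact k * (real k + 1))"
    by (simp only: Suc.IH poly_shift_trunc_pow_recurrence[symmetric]) (simp add: field_simps)
  finally show ?case by (simp add: algebra_simps)
qed

definition ones_poly :: "nat \<Rightarrow> real poly" where
  "ones_poly n = (\<Sum>s<n. monom 1 s)"

lemma degree_ones_poly: "degree (ones_poly n) \<le> n - 1"
  unfolding ones_poly_def by (rule degree_sum_le) (auto intro: order_trans[OF degree_monom_le])

lemma one_minus_X_times_ones_poly: "[:1, -1:] * ones_poly n = 1 - monom 1 n"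
proof (induction n)
  case 0
  show ?case by (simp add: ones_poly_def monom_0)
next
  case (Suc n)
  have "[:1, -1:] * ones_poly (Suc n) = [:1, -1:] * ones_poly n + [:1, -1:] * monom 1 n"
    by (simp add: ones_poly_def algebra_simps)
  also have "[:1, -1:] * monom 1 n = monom 1 n - monom (1::real) (Suc n)"
  proof -
    have X: "[:1, -1:] = (1 - monom 1 1 :: real poly)"
      by (simp add: monom_Suc monom_0 one_pCons)
    show ?thesis
      unfolding X by (simp add: algebra_simps mult_monom)
  qed
  finally show ?case
    using Suc.IH by simp
qed

lemma poly_shift_Qspl_ones_poly:
  assumes "n > 0"
  shows "poly_shift (Qspl (Suc k)) (ones_poly n ^ Suc k) (real n * x) = real n ^ k * Qspl (Suc k) x"
proof -
  let ?b = "[:1, -1:] :: real poly"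
  have pcompose_power: "pcompose (p ^ j) q = pcompose p q ^ j" for p q :: "real poly" and j
    by (induction j) (simp_all add: pcompose_mult pcompose_1)
  have dilation: "?b ^ Suc k * ones_poly n ^ Suc k = pcompose (?b ^ Suc k) (monom 1 n)"
  proof -
    have "pcompose ?b (monom 1 n) = 1 - monom 1 n"
      by (simp add: pcompose_pCons algebra_simps)
    then show ?thesis
      by (simp only: power_mult_distrib[symmetric] one_minus_X_times_ones_poly pcompose_power)
  qed
  have "poly_shift (Qspl (Suc k)) (ones_poly n ^ Suc k) (real n * x)
      = poly_shift (\<lambda>u. (1 / fact k) * poly_shift (trunc_pow k) (?b ^ Suc k) u) (ones_poly n ^ Suc k) (real n * x)"
    by (rule poly_shift_cong) (simp add: Qspl_eq_poly_shift_trunc_pow)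
  also have "\<dots> = (1 / fact k) * poly_shift (trunc_pow k) (pcompose (?b ^ Suc k) (monom 1 n)) (real n * x)"
    by (simp only: poly_shift_scale_fun poly_shift_mult[symmetric] dilation)
  also have "\<dots> = (1 / fact k) * poly_shift (\<lambda>u. real n ^ k * trunc_pow k u) (?b ^ Suc k) x"
    using assms by (simp add: poly_shift_pcompose_monom trunc_pow_dilate)
  also have "\<dots> = real n ^ k * Qspl (Suc k) x"
    by (simp add: poly_shift_scale_fun Qspl_eq_poly_shift_trunc_pow)
  finally show ?thesis .
qed

text \<open>The two-scale relation \<open>Q(x) = \<Sum>\<^sub>r a\<^sub>r Q(n x - r)\<close>; its mask is read off from the symbol
\<open>(1 + z + \<dots> + z\<^sup>n\<^sup>-\<^sup>1)\<^sup>m / n\<^sup>m\<^sup>-\<^sup>1\<close>.\<close>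
lemma Qspl_two_scale:
  assumes "n > 0"
  shows "Qspl (Suc k) x = (\<Sum>r\<le>(n - 1) * Suc k.
           coeff (ones_poly n ^ Suc k) r / real n ^ k * Qspl (Suc k) (real n * x - real r))"
proof -
  have "degree (ones_poly n ^ Suc k) \<le> (n - 1) * Suc k"
    using degree_power_le[of "ones_poly n" "Suc k"] degree_ones_poly[of n]
    by (meson le_trans mult_le_mono1)
  then show ?thesis
    using poly_shift_Qspl_ones_poly[OF assms, of k x] assms
    by (simp add: poly_shift_eq_sum_atMost sum_divide_distrib[symmetric] field_simps)
qed

lemma bspl_two_scale:
  fixes i :: "int ^ 'd::finite"
  assumes "n > 0"
  shows "bspl n (Suc k) l i x = (\<Sum>g\<in>PiE UNIV (\<lambda>_. {..(n - 1) * Suc k}).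
           (\<Prod>j\<in>UNIV. coeff (ones_poly n ^ Suc k) (g j) / real n ^ k)
             * bspl n (Suc k) (Suc l) (\<chi> j. int n * i $ j + int (g j)) x)"
proof -
  define c where "c r = coeff (ones_poly n ^ Suc k) r / real n ^ k" for r
  define y where "y j = real n ^ l * x $ j - real_of_int (i $ j)" for j
  have shift: "real n * y j - real (g j)
      = real n ^ Suc l * x $ j - real_of_int ((\<chi> j. int n * i $ j + int (g j)) $ j)" for g j
    unfolding y_def by (simp add: algebra_simps)
  have "bspl n (Suc k) l i x = (\<Prod>j\<in>UNIV. \<Sum>r\<le>(n - 1) * Suc k. c r * Qspl (Suc k) (real n * y j - real r))"
    unfolding bspl_def y_def c_def by (rule prod.cong[OF refl]) (rule Qspl_two_scale[OF assms])
  also have "\<dots> = (\<Sum>g\<in>PiE UNIV (\<lambda>_. {..(n - 1) * Suc k}).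
                    \<Prod>j\<in>UNIV. c (g j) * Qspl (Suc k) (real n * y j - real (g j)))"
    by (rule prod_sum_PiE) auto
  finally show ?thesis
    unfolding c_def[symmetric] bspl_def by (simp only: shift prod.distrib)
qed

subsection \<open>Support and levels\<close>

lemma Qspl_eq_0_outside: "y < 0 \<or> real k + 1 \<le> y \<Longrightarrow> Qspl (Suc k) y = 0"
proof (induction k arbitrary: y)
  case (Suc k)
  then have "Qspl (Suc k) y = 0" "Qspl (Suc k) (y - 1) = 0" by auto
  then show ?case by simp
qed auto

lemma Qspl_nonneg: "0 \<le> Qspl (Suc k) y"
proof (induction k arbitrary: y)
  case (Suc k)
  show ?case
  proof (cases "y < 0 \<or> real k + 2 \<le> y")
    case True
    then have "Qspl (Suc (Suc k)) y = 0"
      by (intro Qspl_eq_0_outside) auto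
    then show ?thesis by linarith
  next
    case False
    then have "0 \<le> y" "0 \<le> real k + 2 - y" by auto
    then show ?thesis using Suc.IH[of y] Suc.IH[of "y - 1"] by simp
  qed
qed simp

lemma Qspl_pos: "0 < y \<Longrightarrow> y < real k + 1 \<Longrightarrow> 0 < Qspl (Suc k) y"
proof (induction k arbitrary: y)
  case (Suc k)
  have nonneg: "0 \<le> y * Qspl (Suc k) y" "0 \<le> (real k + 2 - y) * Qspl (Suc k) (y - 1)"
    using Suc.prems Qspl_nonneg by simp_all
  have "0 < y * Qspl (Suc k) y \<or> 0 < (real k + 2 - y) * Qspl (Suc k) (y - 1)"
  proof (cases "y < real k + 1")
    case True
    then show ?thesis using Suc by simp
  next
    case False
    have "0 < Qspl (Suc k) (y - 1)"
    proof (cases k)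
      case 0
      then show ?thesis using False Suc.prems by simp
    next
      case (Suc k')
      then show ?thesis using False Suc.prems by (intro Suc.IH) auto
    qed
    then show ?thesis using Suc.prems by simp
  qed
  with nonneg have "0 < y * Qspl (Suc k) y + (real k + 2 - y) * Qspl (Suc k) (y - 1)"
    by linarith
  then show ?case
    by (simp del: Qspl.simps add: Qspl.simps(3))
qed simp

lemma bspl_pos:
  "(\<And>j. 0 < real n ^ l * x $ j - real_of_int (i $ j) \<and> real n ^ l * x $ j - real_of_int (i $ j) < real k + 1)
    \<Longrightarrow> 0 < bspl n (Suc k) l i x"
  unfolding bspl_def by (intro prod_pos) (simp add: Qspl_pos)

lemma bspl_nonzero_imp:
  "bspl n (Suc k) l i x \<noteq> 0
    \<Longrightarrow> 0 \<le> real n ^ l * x $ j - real_of_int (i $ j) \<and> real n ^ l * x $ j - real_of_int (i $ j) < real k + 1"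
proof -
  assume "bspl n (Suc k) l i x \<noteq> 0"
  then have "Qspl (Suc k) (real n ^ l * x $ j - real_of_int (i $ j)) \<noteq> 0"
    unfolding bspl_def by (simp add: prod_zero_iff)
  then show ?thesis
    by (meson Qspl_eq_0_outside not_le)
qed

text \<open>A level-\<open>l\<close> spline is positive on a cube of side \<open>(k + 1) / n\<^sup>l\<close>, while a spline of a finer
level vanishes outside a cube of at most half that side.\<close>
lemma bspl_finer_level_neq:
  fixes i i' :: "int ^ 'd::finite"
  assumes n: "n \<ge> 2" and "l < l'"
  shows "bspl n (Suc k) l i \<noteq> (bspl n (Suc k) l' i' :: real ^ 'd \<Rightarrow> real)"
proof
  assume eq: "bspl n (Suc k) l i = (bspl n (Suc k) l' i' :: real ^ 'd \<Rightarrow> real)"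
  define a where "a = real n ^ l"
  define M where "M = real k + 1"
  have a: "0 < a" and M: "0 < M"
    unfolding a_def M_def using n by simp_all
  have "real n ^ 1 \<le> real n ^ (l' - l)"
    using assms by (intro power_increasing) auto
  moreover have "2 \<le> real n"
    using n by simp
  ultimately have "2 \<le> real n ^ (l' - l)"
    unfolding power_one_right by linarith
  then have "2 * a \<le> a * real n ^ (l' - l)"
    using a by simp
  also have "a * real n ^ (l' - l) = real n ^ l'"
    unfolding a_def using assms by (simp add: power_add[symmetric])
  finally have ratio: "2 * a \<le> real n ^ l'" .
  define pt :: "real \<Rightarrow> real ^ 'd" where "pt t = (\<chi> j. (real_of_int (i $ j) + t) / a)" for t
  obtain j :: 'd where True by blast
  have window: "0 \<le> real n ^ l' * pt t $ j - real_of_int (i' $ j) \<and> real n ^ l' * pt t $ j - real_of_int (i' $ j) < M"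
    if "0 < t" "t < M" for t
  proof -
    have "0 < bspl n (Suc k) l i (pt t)"
      using that a by (intro bspl_pos) (simp add: pt_def a_def M_def)
    then show ?thesis
      using bspl_nonzero_imp[of n k l' i' "pt t" j] unfolding eq M_def by simp
  qed
  have "real n ^ l' * (3 * M / 4) / a = real n ^ l' * pt (7 * M / 8) $ j - real n ^ l' * pt (M / 8) $ j"
    unfolding pt_def using a by (simp add: field_simps)
  also have "\<dots> < M"
    using window[of "M / 8"] window[of "7 * M / 8"] M by simp
  finally have "real n ^ l' * (3 * M / 4) < M * a"
    using a by (simp add: divide_less_eq)
  moreover have "2 * a * (3 * M / 4) \<le> real n ^ l' * (3 * M / 4)"
    using ratio M by (intro mult_right_mono) auto
  ultimately show False
    using M a by (simp add: algebra_simps)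
qed

text \<open>Well defined on B-splines by the previous lemma; its value on other functions is junk.\<close>
definition level :: "nat \<Rightarrow> nat \<Rightarrow> (real ^ 'd::finite \<Rightarrow> real) \<Rightarrow> nat" where
  "level n m f = (THE l. \<exists>i. f = bspl n m l i)"

lemma level_bspl:
  assumes "n \<ge> 2" "m \<ge> 1"
  shows "level n m (bspl n m l i :: real ^ 'd::finite \<Rightarrow> real) = l"
  unfolding level_def
proof (rule the_equality)
  fix l' assume "\<exists>i'. (bspl n m l i :: real ^ 'd \<Rightarrow> real) = bspl n m l' i'"
  then obtain i' where "(bspl n m l i :: real ^ 'd \<Rightarrow> real) = bspl n m l' i'" by blast
  moreover obtain k where m: "m = Suc k" using assms(2) by (cases m) auto
  ultimately have eq: "(bspl n (Suc k) l i :: real ^ 'd \<Rightarrow> real) = bspl n (Suc k) l' i'"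
    by simp
  show "l' = l"
  proof (rule linorder_cases[of l l'])
    assume "l < l'"
    then show ?thesis using bspl_finer_level_neq[OF assms(1), of l l' k i i'] eq by simp
  next
    assume "l' < l"
    then show ?thesis using bspl_finer_level_neq[OF assms(1), of l' l k i' i] eq by simp
  qed simp
qed blast

lemma mono_chS: "mono (chS n m)"
  by (auto simp: mono_def chS_def)

lemma descendants_of_child:
  "\<psi> \<in> ch n m \<phi> \<Longrightarrow> (chS n m ^^ k) {\<psi>} \<subseteq> (chS n m ^^ Suc k) {\<phi>}"
  unfolding funpow_Suc_right comp_def
  by (intro funpow_mono[OF mono_chS]) (auto simp: chS_def)

lemma level_descendant:
  assumes "n \<ge> 2" "m \<ge> 1" "\<phi> \<in> Bsplines n m"
  shows "\<psi> \<in> (chS n m ^^ k) {\<phi>} \<Longrightarrow> \<psi> \<in> Bsplines n m \<and> level n m \<psi> = level n m \<phi> + k"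
proof (induction k arbitrary: \<psi>)
  case 0
  then show ?case using assms(3) by simp
next
  case (Suc k)
  then have "\<psi> \<in> chS n m ((chS n m ^^ k) {\<phi>})"
    by simp
  then obtain \<phi>' where "\<phi>' \<in> (chS n m ^^ k) {\<phi>}" "\<psi> \<in> ch n m \<phi>'"
    unfolding chS_def by blast
  then obtain l i k' where "\<phi>' \<in> (chS n m ^^ k) {\<phi>}" "\<phi>' = bspl n m l i" "\<psi> = bspl n m (Suc l) k'"
    unfolding ch_def by blast
  moreover from this Suc.IH have "level n m \<phi>' = level n m \<phi> + k"
    by blast
  ultimately show ?case
    by (auto simp: Bsplines_def level_bspl[OF assms(1,2)])
qed

subsection \<open>Spans of real functions\<close>

interpretation fun_space: module "\<lambda>c (f :: 'a \<Rightarrow> real) x. c * f x"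
  by unfold_locales (auto simp: fun_eq_iff algebra_simps)

lemma sum_fun_apply: "sum f A x = (\<Sum>a\<in>A. f a x)"
  by (induction A rule: infinite_finite_induct) simp_all

lemma lin_indep_fun_not_in_span:
  assumes indep: "lin_indep_fun S" and "f \<in> S"
  shows "f \<notin> fun_space.span (S - {f})"
proof
  assume "f \<in> fun_space.span (S - {f})"
  then obtain T r where T: "finite T" "T \<subseteq> S - {f}" and f_eq: "f = (\<Sum>t\<in>T. (\<lambda>x. r t * t x))"
    unfolding fun_space.span_explicit by blast
  define c where "c = r(f := -1)"
  have "f \<notin> T"
    using T by blast
  have "(\<Sum>g\<in>insert f T. c g * g x) = 0" for x
  proof -
    have "(\<Sum>g\<in>insert f T. c g * g x) = - f x + (\<Sum>t\<in>T. c t * t x)"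
      using T(1) \<open>f \<notin> T\<close> by (simp add: c_def)
    also have "(\<Sum>t\<in>T. c t * t x) = (\<Sum>t\<in>T. r t * t x)"
      using \<open>f \<notin> T\<close> by (intro sum.cong) (auto simp: c_def)
    also have "(\<Sum>t\<in>T. r t * t x) = f x"
      by (subst f_eq) (simp add: sum_fun_apply)
    finally show ?thesis
      by simp
  qed
  then have "c f = 0"
    using indep T \<open>f \<in> S\<close> unfolding lin_indep_fun_def by blast
  then show False
    by (simp add: c_def)
qed

lemma bspl_in_span_children:
  assumes "n > 0" "m \<ge> 1"
  shows "bspl n m l i \<in> fun_space.span (ch n m (bspl n m l i :: real ^ 'd::finite \<Rightarrow> real))"
proof -
  obtain k where m: "m = Suc k" using assms(2) by (cases m) auto
  have "1 \<le> n" using assms(1) by simp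
  define G where "G = PiE (UNIV :: 'd set) (\<lambda>_. {..(n - 1) * m})"
  define a where "a g = (\<Prod>j\<in>UNIV. coeff (ones_poly n ^ m) (g j) / real n ^ k)" for g :: "'d \<Rightarrow> nat"
  define child where "child g = (bspl n m (Suc l) (\<chi> j. int n * i $ j + int (g j)) :: real ^ 'd \<Rightarrow> real)"
    for g :: "'d \<Rightarrow> nat"
  have "bspl n m l i = (\<Sum>g\<in>G. (\<lambda>x. a g * child g x))"
    unfolding G_def a_def child_def m
    by (intro ext, subst bspl_two_scale[OF assms(1)]) (simp add: sum_fun_apply)
  also have "\<dots> \<in> fun_space.span (ch n m (bspl n m l i))"
  proof (intro fun_space.span_sum fun_space.span_scale fun_space.span_base)
    fix g assume "g \<in> G"
    then have "g j \<le> (n - 1) * m" for j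
      by (auto simp: G_def PiE_iff)
    moreover have "int ((n - 1) * m) = (int n - 1) * int m"
      using \<open>1 \<le> n\<close> by (simp add: of_nat_diff)
    ultimately have "int (g j) \<le> (int n - 1) * int m" for j
      by (metis of_nat_le_iff)
    then show "child g \<in> ch n m (bspl n m l i)"
      unfolding ch_def child_def
      by (intro CollectI exI[of _ l] exI[of _ i] exI[of _ "\<chi> j. int n * i $ j + int (g j)"]) simp
  qed
  finally show ?thesis .
qed

text \<open>Induction from the finest level of \<open>Ls\<close> downwards: a child in \<open>Ls\<close> is replaced by its own
children.\<close>
lemma in_span_escaped_descendants:
  assumes n: "n \<ge> 2" and m: "m \<ge> 1" and "finite Ls" and Ls: "Ls \<subseteq> Bsplines n m"
  shows "\<psi> \<in> Ls \<Longrightarrow> \<psi> \<in> fun_space.span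
           {u \<in> chS n m Ls - Ls. \<exists>k\<ge>1. u \<in> (chS n m ^^ k) {\<psi> :: real ^ 'd::finite \<Rightarrow> real}}"
proof (induction "Max (level n m ` Ls) - level n m \<psi>" arbitrary: \<psi> rule: less_induct)
  case less
  let ?D = "\<lambda>\<psi>. {u \<in> chS n m Ls - Ls. \<exists>k\<ge>1. u \<in> (chS n m ^^ k) {\<psi>}}"
  have "ch n m \<psi> \<subseteq> fun_space.span (?D \<psi>)"
  proof
    fix \<kappa> assume \<kappa>: "\<kappa> \<in> ch n m \<psi>"
    show "\<kappa> \<in> fun_space.span (?D \<psi>)"
    proof (cases "\<kappa> \<in> Ls")
      case True
      obtain l i k where "\<kappa> = bspl n m (Suc l) k" "\<psi> = bspl n m l i"
        using \<kappa> unfolding ch_def by blast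
      then have "level n m \<kappa> = Suc (level n m \<psi>)"
        by (simp add: level_bspl[OF n m])
      moreover have "level n m \<kappa> \<le> Max (level n m ` Ls)"
        using True \<open>finite Ls\<close> by simp
      ultimately have "Max (level n m ` Ls) - level n m \<kappa> < Max (level n m ` Ls) - level n m \<psi>"
        by linarith
      then have "\<kappa> \<in> fun_space.span (?D \<kappa>)"
        using True by (rule less.hyps)
      moreover have "?D \<kappa> \<subseteq> ?D \<psi>"
      proof
        fix u assume "u \<in> ?D \<kappa>"
        then obtain k where "u \<in> chS n m Ls - Ls" "u \<in> (chS n m ^^ k) {\<kappa>}"
          by blast
        moreover have "Suc k \<ge> 1"
          by simp
        ultimately show "u \<in> ?D \<psi>"
          using descendants_of_child[OF \<kappa>, of k] by blast
      qed
      ultimately show ?thesis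
        using fun_space.span_mono by blast
    next
      case False
      have "\<kappa> \<in> chS n m Ls"
        using \<kappa> less.prems unfolding chS_def by blast
      moreover have "\<kappa> \<in> (chS n m ^^ 1) {\<psi>}"
        using \<kappa> by (simp add: chS_def)
      ultimately have "\<kappa> \<in> ?D \<psi>"
        using False by blast
      then show ?thesis
        by (rule fun_space.span_base)
    qed
  qed
  then have "fun_space.span (ch n m \<psi>) \<subseteq> fun_space.span (?D \<psi>)"
    by (simp add: fun_space.span_minimal)
  moreover have "\<psi> \<in> fun_space.span (ch n m \<psi>)"
  proof -
    obtain l i where "\<psi> = bspl n m l i"
      using less.prems Ls by (auto simp: Bsplines_def)
    then show ?thesis
      using n bspl_in_span_children[OF _ m, of n l i] by simp
  qed
  ultimately show ?case
    by blast
qed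

theorem lemma6p4:
  fixes n m :: nat and L Ls :: "(real ^ 'd::finite \<Rightarrow> real) set"
  assumes "n \<ge> 2" and "m \<ge> 2"
    and "lineage n m L" and "lineage n m Ls" and "L \<subseteq> Ls"
    and "lin_indep_fun (hgen n m L)"
  shows "\<forall>\<phi> \<in> (Ls - L) \<inter> hgen n m L. \<exists>k::nat. k \<ge> 1 \<and>
           (\<exists>\<phi>s. \<phi>s \<in> (hgen n m Ls - hgen n m L) \<inter> (chS n m ^^ k) {\<phi>})"
proof
  fix \<phi> assume \<phi>: "\<phi> \<in> (Ls - L) \<inter> hgen n m L"
  let ?D = "{u \<in> chS n m Ls - Ls. \<exists>k\<ge>1. u \<in> (chS n m ^^ k) {\<phi>}}"
  have Ls: "finite Ls" "Ls \<subseteq> Bsplines n m"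
    using assms(4) by (auto simp: lineage_def)
  have m: "m \<ge> 1"
    using assms(2) by simp
  have "\<phi> \<in> fun_space.span ?D"
    using in_span_escaped_descendants[OF assms(1) m Ls] \<phi> by simp
  moreover have "\<phi> \<notin> ?D"
  proof
    assume "\<phi> \<in> ?D"
    then obtain k where "k \<ge> 1" "\<phi> \<in> (chS n m ^^ k) {\<phi>}"
      by blast
    moreover have "\<phi> \<in> Bsplines n m"
      using \<phi> Ls(2) by blast
    ultimately show False
      using level_descendant[OF assms(1) m] by fastforce
  qed
  ultimately have "\<not> ?D \<subseteq> hgen n m L - {\<phi>}"
    using lin_indep_fun_not_in_span[OF assms(6)] fun_space.span_mono \<phi> by blast
  then obtain u k where "u \<in> chS n m Ls - Ls" "k \<ge> 1" "u \<in> (chS n m ^^ k) {\<phi>}" "u \<notin> hgen n m L"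
    using \<open>\<phi> \<notin> ?D\<close> by blast
  moreover from this have "u \<in> hgen n m Ls"
    by (simp add: hgen_def)
  ultimately show "\<exists>k::nat. k \<ge> 1 \<and> (\<exists>\<phi>s. \<phi>s \<in> (hgen n m Ls - hgen n m L) \<inter> (chS n m ^^ k) {\<phi>})"
    by blast
qed

end
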